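(* Let $N\ge 2$ and $x_0<x_1<\dots<x_{N-1}<x_N$. Let $\rho$ be an integrable function on $[x_0,x_N]$, let $G(x,s)$ be the Green function of the boundary value problem $\varphi''(x)=-\rho(x)$, $\varphi(x_0)=\varphi(x_N)=0$ on $[x_0,x_N]$, and let $\varphi(x)=\int_{x_0}^{x_N}G(x,s)\rho(s)\,ds$ be the solution of this problem. Define $$\alpha_j^R=\int_{x_{j-1}}^{x_j}G(x_j,s)\rho(s)\,ds\quad (j=1,\dots,N-1),\qquad \alpha_j^L=\int_{x_{j-1}}^{x_j}G(x_{j-1},s)\rho(s)\,ds\quad (j=2,\dots,N).$$ Then for every $i=1,\dots,N-1$, $$\varphi(x_i)=\sum_{j=1}^{i}\alpha_j^R\,\frac{x_i-x_N}{x_j-x_N}+\sum_{j=i+1}^{N}\alpha_j^L\,\frac{x_i-x_0}{x_{j-1}-x_0}.$$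
   Context: The Green function here is $G(x,s)=\frac{(\min(x,s)-x_0)(x_N-\max(x,s))}{x_N-x_0}$, so that $\varphi(x)=\int_{x_0}^{x_N}G(x,s)\rho(s)\,ds$ solves $\varphi''=-\rho$ with $\varphi(x_0)=\varphi(x_N)=0$. *)

theory Defs
  imports "HOL-Analysis.Analysis"
begin

text \<open>Green function of phi'' = -rho, phi(a) = phi(b) = 0 on [a,b].\<close>
definition green :: "real \<Rightarrow> real \<Rightarrow> real \<Rightarrow> real \<Rightarrow> real" where
  "green a b x s = (min x s - a) * (b - max x s) / (b - a)"

definition green_sol :: "real \<Rightarrow> real \<Rightarrow> (real \<Rightarrow> real) \<Rightarrow> real \<Rightarrow> real" where
  "green_sol a b \<rho> x = integral {a..b} (\<lambda>s. green a b x s * \<rho> s)"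

end

theory Submission
  imports Defs
begin

text \<open>For fixed s the kernel G(x, s) is affine in x on either side of s, vanishing at x_N on
  the right and at x_0 on the left. So on a cell [x_(j-1), x_j] to the left of x_i, G(x_i, s) is
  G(x_j, s) rescaled by (x_i - x_N)/(x_j - x_N), and on a cell to the right of x_i it is
  G(x_(j-1), s) rescaled by (x_i - x_0)/(x_(j-1) - x_0); splitting phi(x_i) over the partition
  gives the formula.\<close>

lemma green_eq_scaled_left:
  assumes "s \<le> y" "s \<le> z" "y \<noteq> b"
  shows "green a b z s = (z - b) / (y - b) * green a b y s"
  using assms by (auto simp: green_def min_absorb2 max_absorb1 divide_simps) (auto simp: algebra_simps)

lemma green_eq_scaled_right:
  assumes "y \<le> s" "z \<le> s" "y \<noteq> a"
  shows "green a b z s = (z - a) / (y - a) * green a b y s"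
  using assms by (auto simp: green_def min_absorb1 max_absorb2 divide_simps)

lemma continuous_on_green: "continuous_on S (green a b x)"
  unfolding green_def divide_inverse by (intro continuous_intros)

lemma continuous_mult_absolutely_integrable_on:
  fixes g \<rho> :: "real \<Rightarrow> real"
  assumes "compact S" "continuous_on S g" "\<rho> absolutely_integrable_on S"
  shows "(\<lambda>s. g s * \<rho> s) absolutely_integrable_on S"
proof (rule absolutely_integrable_bounded_measurable_product_real)
  show "S \<in> sets lebesgue"
    using assms(1) by (simp add: fmeasurableD lmeasurable_compact)
  with assms(2) show "g \<in> borel_measurable (lebesgue_on S)"
    by (rule continuous_imp_measurable_on_sets_lebesgue)
  show "bounded (g ` S)"
    using assms by (intro compact_imp_bounded compact_continuous_image)
qed (rule assms(3))

lemma integral_combine_chain: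
  fixes f :: "real \<Rightarrow> 'a::banach" and x :: "nat \<Rightarrow> real"
  assumes "\<And>k. k < N \<Longrightarrow> x k \<le> x (Suc k)" "f integrable_on {x 0..x N}"
  shows "integral {x 0..x N} f = (\<Sum>j=1..N. integral {x (j - 1)..x j} f)"
  using assms
proof (induction N)
  case (Suc N)
  have "x 0 \<le> x N"
    by (rule lift_Suc_mono_le_ivl[where N="{..<N}"]) (use Suc.prems(1) in auto)
  moreover have "x N \<le> x (Suc N)"
    using Suc.prems(1) by simp
  ultimately have "integral {x 0..x (Suc N)} f = integral {x 0..x N} f + integral {x N..x (Suc N)} f"
    using Suc.prems(2) by (rule Henstock_Kurzweil_Integration.integral_combine[symmetric])
  also have "integral {x 0..x N} f = (\<Sum>j=1..N. integral {x (j - 1)..x j} f)"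
    using Suc \<open>x N \<le> x (Suc N)\<close> by (simp add: integrable_subinterval_real[OF Suc.prems(2)])
  finally show ?case
    by simp
qed simp

lemma integral_green_scaled_left:
  assumes "d \<le> y" "y \<le> z" "y \<noteq> b"
  shows "integral {c..d} (\<lambda>s. green a b z s * \<rho> s)
       = integral {c..d} (\<lambda>s. green a b y s * \<rho> s) * ((z - b) / (y - b))"
proof -
  have "green a b z s * \<rho> s = (z - b) / (y - b) * (green a b y s * \<rho> s)" if "s \<in> {c..d}" for s
    using that assms green_eq_scaled_left[of s y z b a] by simp
  then have "integral {c..d} (\<lambda>s. green a b z s * \<rho> s)
      = integral {c..d} (\<lambda>s. (z - b) / (y - b) * (green a b y s * \<rho> s))"
    by (rule integral_cong)
  then show ?thesis
    by simp
qed

lemma integral_green_scaled_right: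
  assumes "y \<le> c" "z \<le> y" "y \<noteq> a"
  shows "integral {c..d} (\<lambda>s. green a b z s * \<rho> s)
       = integral {c..d} (\<lambda>s. green a b y s * \<rho> s) * ((z - a) / (y - a))"
proof -
  have "green a b z s * \<rho> s = (z - a) / (y - a) * (green a b y s * \<rho> s)" if "s \<in> {c..d}" for s
    using that assms green_eq_scaled_right[of y s z a b] by simp
  then have "integral {c..d} (\<lambda>s. green a b z s * \<rho> s)
      = integral {c..d} (\<lambda>s. (z - a) / (y - a) * (green a b y s * \<rho> s))"
    by (rule integral_cong)
  then show ?thesis
    by simp
qed

theorem theorem1:
  fixes N :: nat and x :: "nat \<Rightarrow> real" and \<rho> :: "real \<Rightarrow> real" and i :: nat
  assumes "N \<ge> 2"
    and "\<And>k. k < N \<Longrightarrow> x k < x (Suc k)"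
    and "\<rho> absolutely_integrable_on {x 0..x N}"
    and "1 \<le> i" and "i \<le> N - 1"
  shows "green_sol (x 0) (x N) \<rho> (x i) =
      (\<Sum>j=1..i. integral {x (j - 1)..x j} (\<lambda>s. green (x 0) (x N) (x j) s * \<rho> s)
                  * ((x i - x N) / (x j - x N)))
    + (\<Sum>j=i+1..N. integral {x (j - 1)..x j} (\<lambda>s. green (x 0) (x N) (x (j - 1)) s * \<rho> s)
                  * ((x i - x 0) / (x (j - 1) - x 0)))"
proof -
  have less: "x m < x n" if "m < n" "n \<le> N" for m n
    by (rule lift_Suc_mono_less_ivl[where N="{..<N}"]) (use assms(2) that in auto)
  have le: "x m \<le> x n" if "m \<le> n" "n \<le> N" for m n
    using less[of m n] that by (cases "m = n") auto
  let ?f = "\<lambda>j s. green (x 0) (x N) (x j) s * \<rho> s"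
  have "?f i integrable_on {x 0..x N}"
    using continuous_mult_absolutely_integrable_on[OF _ continuous_on_green assms(3)]
    by (simp add: absolutely_integrable_on_def)
  then have "green_sol (x 0) (x N) \<rho> (x i) = (\<Sum>j=1..N. integral {x (j - 1)..x j} (?f i))"
    unfolding green_sol_def using assms(2) by (intro integral_combine_chain) (simp_all add: less_imp_le)
  also have "\<dots> = (\<Sum>j=1..i. integral {x (j - 1)..x j} (?f i))
                 + (\<Sum>j=i+1..N. integral {x (j - 1)..x j} (?f i))"
    using assms(4,5) sum.ub_add_nat[of 1 i _ "N - i"] by simp
  also have "(\<Sum>j=1..i. integral {x (j - 1)..x j} (?f i))
      = (\<Sum>j=1..i. integral {x (j - 1)..x j} (?f j) * ((x i - x N) / (x j - x N)))"
    using assms(1,5) by (intro sum.cong refl integral_green_scaled_left le less_imp_neq less) auto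
  also have "(\<Sum>j=i+1..N. integral {x (j - 1)..x j} (?f i))
      = (\<Sum>j=i+1..N. integral {x (j - 1)..x j} (?f (j - 1)) * ((x i - x 0) / (x (j - 1) - x 0)))"
    using assms(4) by (intro sum.cong refl integral_green_scaled_right le less_imp_neq[symmetric] less) auto
  finally show ?thesis .
qed

end
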